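(* Let $(G_n)$ be a sequence of graphs with $\min_{v\in V}\delta_v=\omega(\log n)$, let $k\ge3$ be odd and $p_k^\star<p\le1$, and run the $(k,p,\mathcal B)$-Edge-Majority dynamics from the configuration in which every node is $\mathcal R$. Then for every $\gamma>0$ there exists a constant $T=T(p,k,\gamma)$ such that $$\Pr\big(\exists t\le T:\ \phi^{(t)}_{\max}\le\gamma\big)=1-o(1).$$
   Context: $G_n=(V,E)$, $V=\{1,\dots,n\}$, $N(u)$ neighbourhood, $\delta_u=|N(u)|$; asymptotics as $n\to\infty$. States in $\{\mathcal R,\mathcal B\}$; $R^{(t)}$ the $\mathcal R$ nodes at round $t$; $\phi_u^{(t)}=|N(u)\cap R^{(t)}|/\delta_u$, $\phi^{(t)}_{\max}=\max_u\phi_u^{(t)}$. $(k,p,\mathcal B)$-Edge-Majority: in each round $t\ge1$ every node $u$ independently samples $k$ neighbours uniformly with replacement; for each sampled $v$, independently, $u$ sees $v$ as $\mathcal B$ with probability $p$ and otherwise sees $v$'s true state at round $t-1$; $u$ adopts the state seen more often. $F_{p,k}(x)=\Pr[\mathrm{Bin}(k,(1-p)x)\ge(k+1)/2]$. $p_k^\star\in[1/9,1/2)$ is the (unique) value such that for $0\le p<p_k^\star$, $F_{p,k}(x)=x$ on $[0,1]$ has exactly three solutions, for $p=p_k^\star$ exactly two, and for $p>p_k^\star$ only $0$. *)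

theory Defs
  imports "HOL-Probability.Probability"
begin

text \<open>A sequence of graphs: G n u v means u,v adjacent in G_n, vertex set V_n = {1..n}.
  Configurations are maps nat => bool, True meaning state R, False meaning state B.\<close>

definition verts :: "nat \<Rightarrow> nat set" where
  "verts n = {1..n}"

definition nbrs :: "(nat \<Rightarrow> nat \<Rightarrow> nat \<Rightarrow> bool) \<Rightarrow> nat \<Rightarrow> nat \<Rightarrow> nat set" where
  "nbrs G n u = {v \<in> verts n. G n u v}"

definition deg :: "(nat \<Rightarrow> nat \<Rightarrow> nat \<Rightarrow> bool) \<Rightarrow> nat \<Rightarrow> nat \<Rightarrow> nat" where
  "deg G n u = card (nbrs G n u)"

definition min_deg :: "(nat \<Rightarrow> nat \<Rightarrow> nat \<Rightarrow> bool) \<Rightarrow> nat \<Rightarrow> nat" where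
  "min_deg G n = Min (deg G n ` verts n)"

definition simple_graph_seq :: "(nat \<Rightarrow> nat \<Rightarrow> nat \<Rightarrow> bool) \<Rightarrow> bool" where
  "simple_graph_seq G \<longleftrightarrow> (\<forall>n u v. G n u v = G n v u) \<and> (\<forall>n u. \<not> G n u u)"

definition phi :: "(nat \<Rightarrow> nat \<Rightarrow> nat \<Rightarrow> bool) \<Rightarrow> nat \<Rightarrow> (nat \<Rightarrow> bool) \<Rightarrow> nat \<Rightarrow> real" where
  "phi G n \<sigma> u = real (card (nbrs G n u \<inter> {v. \<sigma> v})) / real (deg G n u)"

definition phi_max :: "(nat \<Rightarrow> nat \<Rightarrow> nat \<Rightarrow> bool) \<Rightarrow> nat \<Rightarrow> (nat \<Rightarrow> bool) \<Rightarrow> real" where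
  "phi_max G n \<sigma> = Max (phi G n \<sigma> ` verts n)"

definition sample_view :: "(nat \<Rightarrow> nat \<Rightarrow> nat \<Rightarrow> bool) \<Rightarrow> nat \<Rightarrow> real \<Rightarrow> (nat \<Rightarrow> bool) \<Rightarrow> nat \<Rightarrow> bool pmf" where
  "sample_view G n p \<sigma> u =
     do { v \<leftarrow> pmf_of_set (nbrs G n u);
          b \<leftarrow> bernoulli_pmf p;
          return_pmf (if b then False else \<sigma> v) }"

definition node_update :: "(nat \<Rightarrow> nat \<Rightarrow> nat \<Rightarrow> bool) \<Rightarrow> nat \<Rightarrow> nat \<Rightarrow> real \<Rightarrow> (nat \<Rightarrow> bool) \<Rightarrow> nat \<Rightarrow> bool pmf" where
  "node_update G n k p \<sigma> u =
     do { views \<leftarrow> replicate_pmf k (sample_view G n p \<sigma> u);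
          return_pmf (count_list views True > count_list views False) }"

definition em_step :: "(nat \<Rightarrow> nat \<Rightarrow> nat \<Rightarrow> bool) \<Rightarrow> nat \<Rightarrow> nat \<Rightarrow> real \<Rightarrow> (nat \<Rightarrow> bool) \<Rightarrow> (nat \<Rightarrow> bool) pmf" where
  "em_step G n k p \<sigma> = Pi_pmf (verts n) False (node_update G n k p \<sigma>)"

fun em_traj :: "(nat \<Rightarrow> nat \<Rightarrow> nat \<Rightarrow> bool) \<Rightarrow> nat \<Rightarrow> nat \<Rightarrow> real \<Rightarrow> nat \<Rightarrow> (nat \<Rightarrow> bool) list pmf" where
  "em_traj G n k p 0 = return_pmf [(\<lambda>u. u \<in> verts n)]"
| "em_traj G n k p (Suc t) =
     do { xs \<leftarrow> em_traj G n k p t;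
          \<sigma> \<leftarrow> em_step G n k p (last xs);
          return_pmf (xs @ [\<sigma>]) }"

definition F :: "real \<Rightarrow> nat \<Rightarrow> real \<Rightarrow> real" where
  "F p k x = (\<Sum>i\<in>{i. i \<le> k \<and> real i \<ge> (real k + 1) / 2}.
                real (k choose i) * ((1 - p) * x) ^ i * (1 - (1 - p) * x) ^ (k - i))"

definition fixpoints :: "real \<Rightarrow> nat \<Rightarrow> real set" where
  "fixpoints p k = {x \<in> {0..1}. F p k x = x}"

definition p_star :: "nat \<Rightarrow> real" where
  "p_star k = (THE q. 1/9 \<le> q \<and> q < 1/2 \<and>
       (\<forall>p. 0 \<le> p \<and> p < q \<longrightarrow> card (fixpoints p k) = 3) \<and>
       card (fixpoints q k) = 2 \<and>
       (\<forall>p. q < p \<and> p \<le> 1 \<longrightarrow> fixpoints p k = {0}))"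

end

theory Submission
  imports Defs
begin

text \<open>Write G h y = majority_poly h y for the probability that Bin(2h+1, y) exceeds h, so that
  F p (2h+1) x = G h ((1-p) x). The ratio G h y / y is unimodal on [0,1] with peak value M in
  [9/8, 2), and a nonzero fixed point x of F corresponds to a point (1-p) x where this ratio
  equals 1/(1-p). Hence F has three, two or one fixed points according as (1-p) M is greater than,
  equal to or less than 1, which identifies p_star as 1 - 1/M; for p above it,
  F p k x \<le> \<rho> x with \<rho> = (1-p) M < 1.

  In one round the fraction of R-neighbours of a node is an average of independent indicators
  whose means F p k (phi v) are at most \<rho> phi_max. By Hoeffding's inequality and a union bound
  over the n nodes, phi_max exceeds \<rho> phi_max + \<epsilon> with probability at most
  n exp(-2 \<epsilon>^2 min_deg), which is at most 1/n once min_deg \<ge> ln n / \<epsilon>^2. Following the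
  schedule max \<gamma> (((1+\<rho>)/2)^t) with \<epsilon> = (1-\<rho>) \<gamma> / 2, phi_max falls to \<gamma> after a fixed
  number T of rounds, except with probability at most T/n.\<close>

section \<open>The majority polynomial\<close>

definition majority_poly :: "nat \<Rightarrow> real \<Rightarrow> real" where
  "majority_poly h y = (\<Sum>i=Suc h..2*h+1. Bernstein (2*h+1) i y)"

definition majority_poly_deriv :: "nat \<Rightarrow> real \<Rightarrow> real" where
  "majority_poly_deriv h y = real ((2*h+1) * (2*h choose h)) * (y*(1-y))^h"

lemma F_eq_majority_poly: "F p (2*h+1) x = majority_poly h ((1-p)*x)"
proof -
  have "{i. i \<le> 2*h+1 \<and> real i \<ge> (real (2*h+1) + 1)/2} = {Suc h..2*h+1}"
    by auto
  then show ?thesis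
    unfolding F_def majority_poly_def Bernstein_def by simp
qed

lemma has_real_derivative_Bernstein:
  assumes "1 \<le> i" "i \<le> n"
  shows "(Bernstein n i has_real_derivative
           real n * (Bernstein (n-1) (i-1) y - Bernstein (n-1) i y)) (at y)"
proof -
  have d: "((\<lambda>y. real (n choose i) * y^i * (1-y)^(n-i)) has_real_derivative
        real (n choose i) * real i * y^(i-1) * (1-y)^(n-i)
        - real (n choose i) * real (n-i) * y^i * (1-y)^(n-i-1)) (at y)"
    by (auto intro!: derivative_eq_intros simp: algebra_simps)
  have absorb: "real (n choose i) * real i = real n * real ((n-1) choose (i-1))"
    using binomial_absorption[of "i-1" n] assms
    by (metis Suc_diff_le diff_Suc_1 le_add_diff_inverse2 of_nat_mult mult.commute plus_1_eq_Suc)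
  have absorb_comp: "real (n choose i) * real (n-i) = real n * real ((n-1) choose i)"
    using binomial_absorb_comp[of n i] by (metis of_nat_mult mult.commute)
  have "real (n choose i) * real i * y^(i-1) * (1-y)^(n-i)
        - real (n choose i) * real (n-i) * y^i * (1-y)^(n-i-1)
      = real n * (Bernstein (n-1) (i-1) y - Bernstein (n-1) i y)"
  proof (cases "i = n")
    case True
    then show ?thesis using absorb assms by (simp add: Bernstein_def)
  next
    case False
    have "n - 1 - (i - 1) = n - i" "n - 1 - i = n - i - 1" using assms by auto
    then show ?thesis unfolding absorb absorb_comp Bernstein_def by (simp add: algebra_simps)
  qed
  with d show ?thesis unfolding Bernstein_def[abs_def] by simp
qed

text \<open>The derivative telescopes: only the middle Bernstein polynomial of degree 2h survives.\<close>
lemma majority_poly_has_real_derivative: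
  "(majority_poly h has_real_derivative majority_poly_deriv h y) (at y)"
proof -
  let ?B = "\<lambda>j. Bernstein (2*h) j y"
  have "(majority_poly h has_real_derivative (\<Sum>i=Suc h..2*h+1.
      real (2*h+1) * (Bernstein (2*h+1-1) (i-1) y - Bernstein (2*h+1-1) i y))) (at y)"
    unfolding majority_poly_def[abs_def]
    by (rule DERIV_sum, rule has_real_derivative_Bernstein) auto
  also have "(\<Sum>i=Suc h..2*h+1.
      real (2*h+1) * (Bernstein (2*h+1-1) (i-1) y - Bernstein (2*h+1-1) i y))
      = real (2*h+1) * (\<Sum>j=h..2*h. ?B j - ?B (Suc j))"
    by (simp add: sum_distrib_left sum.shift_bounds_cl_Suc_ivl del: sum.cl_ivl_Suc)
  also have "(\<Sum>j=h..2*h. ?B j - ?B (Suc j)) = ?B h - ?B (Suc (2*h))"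
    using sum_Suc_diff[of h "2*h" ?B] by (simp add: sum_subtractf)
  also have "?B h - ?B (Suc (2*h)) = real (2*h choose h) * (y*(1-y))^h"
    by (simp add: Bernstein_def power_mult_distrib mult_2)
  finally show ?thesis by (simp only: majority_poly_deriv_def of_nat_mult mult.assoc)
qed

lemma majority_poly_0 [simp]: "majority_poly h 0 = 0"
  unfolding majority_poly_def Bernstein_def by simp

lemma majority_poly_1 [simp]: "majority_poly h 1 = 1"
proof -
  have "majority_poly h 1 = (\<Sum>i=Suc h..2*h+1. if i = 2*h+1 then 1 else 0)"
    unfolding majority_poly_def Bernstein_def by (intro sum.cong) auto
  then show ?thesis by simp
qed

lemma majority_poly_le_1:
  assumes "0 \<le> y" "y \<le> 1"
  shows "majority_poly h y \<le> 1"
proof -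
  have "majority_poly h y \<le> (\<Sum>i\<le>2*h+1. Bernstein (2*h+1) i y)"
    unfolding majority_poly_def by (intro sum_mono2) (auto intro!: Bernstein_nonneg simp: assms)
  then show ?thesis by simp
qed

lemma majority_poly_pos:
  assumes "0 < y" "y \<le> 1"
  shows "0 < majority_poly h y"
proof -
  have "Bernstein (2*h+1) (2*h+1) y \<le> majority_poly h y"
    unfolding majority_poly_def using assms
    by (intro member_le_sum) (auto intro!: Bernstein_nonneg)
  moreover have "0 < Bernstein (2*h+1) (2*h+1) y" using assms by (simp add: Bernstein_def)
  ultimately show ?thesis by linarith
qed

text \<open>Markov's inequality for Bin(2h+1, y), whose mean is (2h+1) y.\<close>
lemma majority_poly_le_Markov:
  assumes "0 \<le> y" "y \<le> 1"
  shows "majority_poly h y \<le> real (2*h+1) * y / real (h+1)"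
proof -
  have "majority_poly h y \<le> (\<Sum>i=Suc h..2*h+1. real i / real (h+1) * Bernstein (2*h+1) i y)"
    unfolding majority_poly_def
  proof (intro sum_mono)
    fix i assume "i \<in> {Suc h..2*h+1}"
    then have "1 \<le> real i / real (h+1)" by (auto simp: field_simps)
    moreover have "0 \<le> Bernstein (2*h+1) i y" using assms by (intro Bernstein_nonneg)
    ultimately show "Bernstein (2*h+1) i y \<le> real i / real (h+1) * Bernstein (2*h+1) i y"
      using mult_right_mono[of 1 "real i / real (h+1)" "Bernstein (2*h+1) i y"] by simp
  qed
  also have "\<dots> \<le> (\<Sum>i\<le>2*h+1. real i / real (h+1) * Bernstein (2*h+1) i y)"
    by (intro sum_mono2) (auto intro!: Bernstein_nonneg mult_nonneg_nonneg divide_nonneg_nonneg simp: assms)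
  also have "\<dots> = (\<Sum>i\<le>2*h+1. real i * Bernstein (2*h+1) i y) / real (h+1)"
    by (simp only: sum_divide_distrib) (intro sum.cong, auto)
  finally show ?thesis unfolding sum_k_Bernstein .
qed

lemma binomial_odd_symmetric: "(2*h+1 choose Suc h) = (2*h+1 choose h)"
  using binomial_symmetric[of h "2*h+1"] by simp

lemma odd_times_central_binomial: "(2*h+1) * (2*h choose h) = (h+1) * (2*h+1 choose h)"
  using Suc_times_binomial[of h "2*h"] binomial_odd_symmetric[of h] by simp

lemma central_binomial_Suc: "(2 * Suc h choose Suc h) = 2 * (2*h+1 choose h)"
proof -
  have "2 * Suc h = Suc (2*h+1)" by simp
  then show ?thesis
    using binomial_Suc_Suc[of "2*h+1" h] binomial_odd_symmetric[of h]
    by (simp del: binomial_Suc_Suc)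
qed

lemma majority_poly_Suc_diff:
  "majority_poly (Suc h) y - majority_poly h y
     = real (2*h+1 choose h) * (y*(1-y))^Suc h * (2*y-1)"
proof -
  define C where "C = real (2*h+1 choose h)"
  define E where "E y = majority_poly (Suc h) y - majority_poly h y - C * (y*(1-y))^Suc h * (2*y-1)"
    for y
  have "(E has_real_derivative 0) (at x)" for x
  proof -
    define w where "w = (x*(1-x))^h"
    have deriv_h: "majority_poly_deriv h x = C * real (h+1) * w"
      unfolding majority_poly_deriv_def odd_times_central_binomial by (simp add: C_def w_def algebra_simps)
    have deriv_Suc: "majority_poly_deriv (Suc h) x = C * real (4*h+6) * (x*(1-x)) * w"
      unfolding majority_poly_deriv_def C_def w_def central_binomial_Suc by (simp add: algebra_simps)
    have "(E has_real_derivative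
       majority_poly_deriv (Suc h) x - majority_poly_deriv h x
       - (C * (x*(1-x))^Suc h * (2*1 - 0)
          + C * (real (Suc h) * ((x*(0-1) + 1*(1-x)) * (x*(1-x))^(Suc h - Suc 0))) * (2*x-1))) (at x)"
      unfolding E_def
      by (intro DERIV_diff DERIV_cmult DERIV_mult' DERIV_power majority_poly_has_real_derivative
          DERIV_ident DERIV_const)
    moreover have "(x*(1-x))^Suc h = x*(1-x)*w" "(x*(1-x))^(Suc h - Suc 0) = w"
      unfolding w_def by simp_all
    then have "majority_poly_deriv (Suc h) x - majority_poly_deriv h x
       - (C * (x*(1-x))^Suc h * (2*1 - 0)
          + C * (real (Suc h) * ((x*(0-1) + 1*(1-x)) * (x*(1-x))^(Suc h - Suc 0))) * (2*x-1)) = 0"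
      unfolding deriv_h deriv_Suc by (simp add: algebra_simps)
    ultimately show ?thesis by simp
  qed
  then have "E y = E 0" using DERIV_isconst_all by blast
  then show ?thesis by (simp add: E_def C_def)
qed

lemma majority_poly_mono_Suc:
  assumes "1/2 \<le> y" "y \<le> 1"
  shows "majority_poly h y \<le> majority_poly (Suc h) y"
proof -
  have "0 \<le> real (2*h+1 choose h) * (y*(1-y))^Suc h * (2*y-1)"
    using assms by (intro mult_nonneg_nonneg zero_le_power) auto
  then show ?thesis using majority_poly_Suc_diff[of h y] by simp
qed

text \<open>This bound is only needed to place p_star above 1/9, as its definition demands.\<close>
lemma majority_poly_three_quarters: "1 \<le> h \<Longrightarrow> 27/32 \<le> majority_poly h (3/4)"
proof (induction h rule: dec_induct)
  case base
  then show ?case by (simp add: majority_poly_def Bernstein_def numeral_eq_Suc)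
next
  case (step h)
  then show ?case using majority_poly_mono_Suc[of "3/4" h] by simp
qed

section \<open>Unimodality of majority_poly h y / y\<close>

text \<open>The ratio majority_poly h y / y, written as a polynomial so that it is continuous at 0.\<close>
definition majority_ratio :: "nat \<Rightarrow> real \<Rightarrow> real" where
  "majority_ratio h y = (\<Sum>i=Suc h..2*h+1. real (2*h+1 choose i) * y^(i-1) * (1-y)^(2*h+1-i))"

lemma majority_poly_eq_mult_ratio: "majority_poly h y = y * majority_ratio h y"
  unfolding majority_poly_def majority_ratio_def Bernstein_def sum_distrib_left
  by (intro sum.cong refl) (auto simp: algebra_simps power_eq_if)

lemma majority_ratio_eq_divide: "y \<noteq> 0 \<Longrightarrow> majority_ratio h y = majority_poly h y / y"
  using majority_poly_eq_mult_ratio[of h y] by simp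

lemma continuous_on_majority_ratio: "continuous_on A (majority_ratio h)"
  unfolding majority_ratio_def by (intro continuous_intros)

lemma majority_ratio_0: "1 \<le> h \<Longrightarrow> majority_ratio h 0 = 0"
  unfolding majority_ratio_def by (intro sum.neutral) auto

lemma majority_ratio_1 [simp]: "majority_ratio h 1 = 1"
  using majority_poly_eq_mult_ratio[of h 1] by simp

lemma majority_ratio_pos: "0 < y \<Longrightarrow> y \<le> 1 \<Longrightarrow> 0 < majority_ratio h y"
  using majority_poly_pos[of y h] majority_ratio_eq_divide[of y h] by simp

lemma majority_ratio_three_quarters: "1 \<le> h \<Longrightarrow> 9/8 \<le> majority_ratio h (3/4)"
  using majority_poly_three_quarters[of h] by (simp add: majority_ratio_eq_divide)

lemma majority_ratio_less_2:
  assumes "0 < y" "y \<le> 1"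
  shows "majority_ratio h y < 2"
proof -
  have "majority_ratio h y \<le> real (2*h+1) / real (h+1)"
    using majority_poly_le_Markov[of y h] assms by (simp add: majority_ratio_eq_divide field_simps)
  also have "\<dots> < 2" by (simp add: field_simps)
  finally show ?thesis .
qed

lemma level_set_majority_ratio_nonzero:
  assumes "1 \<le> h" "v \<noteq> 0"
  shows "{y\<in>{0<..1}. majority_ratio h y = v} = {y\<in>{0..1}. majority_ratio h y = v}"
proof -
  have "0 < y" if "0 \<le> y" "majority_ratio h y = v" for y
    using that assms majority_ratio_0[OF assms(1)] by (cases "y = 0") auto
  then show ?thesis by auto
qed

text \<open>The numerator of the derivative of G(y) / y.\<close>
definition majority_tangent_gap :: "nat \<Rightarrow> real \<Rightarrow> real" where
  "majority_tangent_gap h y = y * majority_poly_deriv h y - majority_poly h y"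

lemma majority_tangent_gap_has_real_derivative:
  assumes "1 \<le> h"
  shows "(majority_tangent_gap h has_real_derivative
           y * real ((2*h+1) * (2*h choose h)) * real h * (y*(1-y))^(h-1) * (1-2*y)) (at y)"
proof -
  let ?c = "real ((2*h+1) * (2*h choose h))"
  have "(majority_tangent_gap h has_real_derivative
      y * (?c * (real h * ((y*(0-1) + 1*(1-y)) * (y*(1-y))^(h - Suc 0))))
      + 1 * majority_poly_deriv h y - majority_poly_deriv h y) (at y)"
    unfolding majority_tangent_gap_def[abs_def] majority_poly_deriv_def[abs_def]
    by (intro DERIV_diff DERIV_mult' DERIV_cmult DERIV_power DERIV_ident DERIV_const
        majority_poly_has_real_derivative[unfolded majority_poly_deriv_def])
  then show ?thesis by (simp add: algebra_simps)
qed

lemma continuous_on_majority_tangent_gap: "1 \<le> h \<Longrightarrow> continuous_on A (majority_tangent_gap h)"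
  using majority_tangent_gap_has_real_derivative
  by (meson DERIV_isCont continuous_at_imp_continuous_on)

lemma majority_tangent_gap_increasing:
  assumes "1 \<le> h" "0 \<le> a" "a < b" "b \<le> 1/2"
  shows "majority_tangent_gap h a < majority_tangent_gap h b"
proof (rule DERIV_pos_imp_increasing_open[OF \<open>a < b\<close> _ continuous_on_majority_tangent_gap[OF assms(1)]])
  fix x assume "a < x" "x < b"
  moreover have "0 < real ((2*h+1) * (2*h choose h))"
    by (simp only: of_nat_0_less_iff) (simp add: zero_less_binomial)
  ultimately have "0 < x * real ((2*h+1) * (2*h choose h)) * real h * (x*(1-x))^(h-1) * (1-2*x)"
    using assms by (intro mult_pos_pos zero_less_power) auto
  then show "\<exists>d. (majority_tangent_gap h has_real_derivative d) (at x) \<and> 0 < d"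
    using majority_tangent_gap_has_real_derivative[OF assms(1)] by blast
qed

lemma majority_tangent_gap_decreasing:
  assumes "1 \<le> h" "1/2 \<le> a" "a < b" "b \<le> 1"
  shows "majority_tangent_gap h b < majority_tangent_gap h a"
proof (rule DERIV_neg_imp_decreasing_open[OF \<open>a < b\<close> _ continuous_on_majority_tangent_gap[OF assms(1)]])
  fix x assume "a < x" "x < b"
  moreover have "0 < real ((2*h+1) * (2*h choose h))"
    by (simp only: of_nat_0_less_iff) (simp add: zero_less_binomial)
  ultimately have "0 < - (x * real ((2*h+1) * (2*h choose h)) * real h * (x*(1-x))^(h-1) * (1-2*x))"
    using assms unfolding minus_mult_right by (intro mult_pos_pos zero_less_power) auto
  then show "\<exists>d. (majority_tangent_gap h has_real_derivative d) (at x) \<and> d < 0"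
    using majority_tangent_gap_has_real_derivative[OF assms(1)] by force
qed

text \<open>The gap vanishes at 0, increases up to 1/2 and decreases to -1 at 1.\<close>
lemma majority_tangent_gap_sign:
  assumes "1 \<le> h"
  obtains y0 where "1/2 < y0" "y0 < 1"
    "\<And>y. 0 < y \<Longrightarrow> y < y0 \<Longrightarrow> 0 < majority_tangent_gap h y"
    "\<And>y. y0 < y \<Longrightarrow> y \<le> 1 \<Longrightarrow> majority_tangent_gap h y < 0"
proof -
  let ?N = "majority_tangent_gap h"
  have N0: "?N 0 = 0" and N1: "?N 1 = -1"
    using assms by (simp_all add: majority_tangent_gap_def majority_poly_deriv_def)
  have N_half: "0 < ?N (1/2)" using majority_tangent_gap_increasing[OF assms, of 0 "1/2"] N0 by simp
  obtain y0 where y0: "1/2 \<le> y0" "y0 \<le> 1" "?N y0 = 0"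
    using IVT2'[of ?N 1 0 "1/2"] continuous_on_majority_tangent_gap[OF assms] N1 N_half by force
  have "?N y0 \<noteq> ?N (1/2)" "?N y0 \<noteq> ?N 1" using y0(3) N_half N1 by auto
  then have "y0 \<noteq> 1/2" "y0 \<noteq> 1" by metis+
  with y0 have y0_bounds: "1/2 < y0" "y0 < 1" by auto
  show ?thesis
  proof (rule that[OF y0_bounds])
    fix y assume "0 < y" "y < y0"
    then show "0 < ?N y"
      using majority_tangent_gap_increasing[OF assms, of 0 y]
        majority_tangent_gap_decreasing[OF assms, of y y0] N0 y0
      by (cases "y \<le> 1/2") auto
  next
    fix y assume "y0 < y" "y \<le> 1"
    then show "?N y < 0" using majority_tangent_gap_decreasing[OF assms, of y0 y] y0 by simp
  qed
qed

lemma majority_poly_divide_has_real_derivative: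
  assumes "y \<noteq> 0"
  shows "((\<lambda>y. majority_poly h y / y) has_real_derivative majority_tangent_gap h y / y^2) (at y)"
  using assms
  by (auto intro!: derivative_eq_intros majority_poly_has_real_derivative
      simp: majority_tangent_gap_def power2_eq_square field_simps)

lemma continuous_on_majority_poly_divide:
  "0 < a \<Longrightarrow> continuous_on {a..b} (\<lambda>y. majority_poly h y / y)"
  by (intro continuous_on_eq[OF continuous_on_majority_ratio]) (simp add: majority_ratio_eq_divide)

lemma majority_ratio_increasing:
  assumes "0 < a" "a < b" "\<And>x. a < x \<Longrightarrow> x < b \<Longrightarrow> 0 < majority_tangent_gap h x"
  shows "majority_ratio h a < majority_ratio h b"
proof -
  have "majority_poly h a / a < majority_poly h b / b"
  proof (rule DERIV_pos_imp_increasing_open[OF assms(2) _ continuous_on_majority_poly_divide[OF assms(1)]])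
    fix x assume "a < x" "x < b"
    with assms have "x \<noteq> 0" "0 < majority_tangent_gap h x / x^2" by auto
    then show "\<exists>d. ((\<lambda>y. majority_poly h y / y) has_real_derivative d) (at x) \<and> 0 < d"
      using majority_poly_divide_has_real_derivative by blast
  qed
  then show ?thesis using assms(1,2) by (simp add: majority_ratio_eq_divide)
qed

lemma majority_ratio_decreasing:
  assumes "0 < a" "a < b" "\<And>x. a < x \<Longrightarrow> x < b \<Longrightarrow> majority_tangent_gap h x < 0"
  shows "majority_ratio h b < majority_ratio h a"
proof -
  have "majority_poly h b / b < majority_poly h a / a"
  proof (rule DERIV_neg_imp_decreasing_open[OF assms(2) _ continuous_on_majority_poly_divide[OF assms(1)]])
    fix x assume "a < x" "x < b"
    with assms have "x \<noteq> 0" "majority_tangent_gap h x / x^2 < 0" by (auto simp: divide_neg_pos)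
    then show "\<exists>d. ((\<lambda>y. majority_poly h y / y) has_real_derivative d) (at x) \<and> d < 0"
      using majority_poly_divide_has_real_derivative by blast
  qed
  then show ?thesis using assms(1,2) by (simp add: majority_ratio_eq_divide)
qed

lemma majority_ratio_unimodal:
  assumes "1 \<le> h"
  obtains y0 where "1/2 < y0" "y0 < 1"
    "strict_mono_on {0..y0} (majority_ratio h)" "strict_antimono_on {y0..1} (majority_ratio h)"
proof -
  obtain y0 where y0: "1/2 < y0" "y0 < 1"
    and below: "\<And>y. 0 < y \<Longrightarrow> y < y0 \<Longrightarrow> 0 < majority_tangent_gap h y"
    and above: "\<And>y. y0 < y \<Longrightarrow> y \<le> 1 \<Longrightarrow> majority_tangent_gap h y < 0"
    using majority_tangent_gap_sign[OF assms] by blast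
  show ?thesis
  proof (rule that[OF y0])
    show "strict_mono_on {0..y0} (majority_ratio h)"
    proof (rule strict_mono_onI)
      fix a b assume ab: "a \<in> {0..y0}" "b \<in> {0..y0}" "a < b"
      show "majority_ratio h a < majority_ratio h b"
      proof (cases "a = 0")
        case True
        then show ?thesis using ab y0 majority_ratio_0[OF assms] majority_ratio_pos[of b h] by simp
      next
        case False
        with ab show ?thesis using below by (intro majority_ratio_increasing) auto
      qed
    qed
    show "strict_antimono_on {y0..1} (majority_ratio h)"
    proof (rule monotone_onI)
      fix a b assume "a \<in> {y0..1}" "b \<in> {y0..1}" "a < b"
      with y0 show "majority_ratio h b < majority_ratio h a"
        using above by (intro majority_ratio_decreasing) auto
    qed
  qed
qed

section \<open>Fixed points of F and the value of p_star\<close>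

lemma level_set_unimodal_peak:
  fixes f :: "real \<Rightarrow> real"
  assumes "a \<le> m" "m \<le> b" "strict_mono_on {a..m} f" "strict_antimono_on {m..b} f"
  shows "{y\<in>{a..b}. f y = f m} = {m}"
proof -
  have "y = m" if "y \<in> {a..b}" "f y = f m" for y
  proof (cases y m rule: linorder_cases)
    case less
    then show ?thesis using that assms strict_mono_onD[OF assms(3), of y m] by auto
  next
    case greater
    then show ?thesis using that assms monotone_onD[OF assms(4), of m y] by auto
  qed
  with assms show ?thesis by auto
qed

lemma card_level_set_unimodal:
  fixes f :: "real \<Rightarrow> real"
  assumes "continuous_on {a..b} f" "a \<le> m" "m \<le> b"
    and inc: "strict_mono_on {a..m} f" and dec: "strict_antimono_on {m..b} f"
    and "f a < v" "f b \<le> v" "v < f m"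
  shows "card {y\<in>{a..b}. f y = v} = 2"
proof -
  have cont: "continuous_on {a..m} f" "continuous_on {m..b} f"
    using assms(1-3) by (auto elim: continuous_on_subset)
  obtain y1 where y1: "a \<le> y1" "y1 \<le> m" "f y1 = v"
    using IVT'[of f a v m] cont assms by auto
  obtain y2 where y2: "m \<le> y2" "y2 \<le> b" "f y2 = v"
    using IVT2'[of f b v m] cont assms by auto
  have "y1 \<noteq> m" "y2 \<noteq> m" using y1 y2 \<open>v < f m\<close> by auto
  then have "y1 < y2" using y1 y2 by auto
  have "{y\<in>{a..b}. f y = v} = {y1, y2}"
  proof (intro equalityI subsetI)
    fix y assume y: "y \<in> {y\<in>{a..b}. f y = v}"
    show "y \<in> {y1, y2}"
    proof (cases "y \<le> m")
      case True
      then have "y = y1" using y y1 strict_mono_on_eqD[OF inc, of y1 y] by auto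
      then show ?thesis by simp
    next
      case False
      have "inj_on f {m..b}" using dec by (simp add: strict_antimono_iff_antimono)
      then have "y = y2" using False y y2 by (auto dest: inj_onD)
      then show ?thesis by simp
    qed
  qed (use y1 y2 assms in auto)
  with \<open>y1 < y2\<close> show ?thesis by simp
qed

lemma fixpoints_odd: "fixpoints p (2*h+1) = {x\<in>{0..1}. majority_poly h ((1-p)*x) = x}"
  unfolding fixpoints_def F_eq_majority_poly ..

lemma fixpoints_eq_insert_level_set:
  assumes "0 \<le> p" "p < 1"
  shows "fixpoints p (2*h+1)
    = insert 0 ((\<lambda>y. y / (1-p)) ` {y\<in>{0<..1}. majority_ratio h y = 1 / (1-p)})"
proof (intro equalityI subsetI)
  fix x assume x: "x \<in> fixpoints p (2*h+1)"
  then have "0 \<le> x" "x \<le> 1" and fixed: "majority_poly h ((1-p)*x) = x"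
    unfolding fixpoints_odd by auto
  show "x \<in> insert 0 ((\<lambda>y. y / (1-p)) ` {y\<in>{0<..1}. majority_ratio h y = 1 / (1-p)})"
  proof (cases "x = 0")
    case False
    with \<open>0 \<le> x\<close> have "0 < x" by simp
    have "(1-p)*x \<in> {0<..1}" using assms \<open>0 < x\<close> \<open>x \<le> 1\<close> by (auto intro: mult_le_one)
    moreover have "majority_ratio h ((1-p)*x) = 1 / (1-p)"
      using fixed assms \<open>0 < x\<close> by (simp add: majority_ratio_eq_divide)
    moreover have "x = (1-p)*x / (1-p)" using assms by simp
    ultimately show ?thesis by blast
  qed simp
next
  fix x assume "x \<in> insert 0 ((\<lambda>y. y / (1-p)) ` {y\<in>{0<..1}. majority_ratio h y = 1 / (1-p)})"
  then consider "x = 0" | y where "x = y / (1-p)" "0 < y" "y \<le> 1" "majority_ratio h y = 1 / (1-p)"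
    by auto
  then show "x \<in> fixpoints p (2*h+1)"
  proof cases
    case 2
    then have "majority_poly h y = x" using majority_poly_eq_mult_ratio[of h y] by simp
    moreover have "majority_poly h y \<le> 1" using 2 by (intro majority_poly_le_1) auto
    moreover have "(1-p)*x = y" using 2 assms by simp
    ultimately show ?thesis using 2 assms unfolding fixpoints_odd by simp
  qed (unfold fixpoints_odd, simp)
qed

lemma card_fixpoints_eq_Suc:
  assumes "0 \<le> p" "p < 1" "finite {y\<in>{0<..1}. majority_ratio h y = 1 / (1-p)}"
  shows "card (fixpoints p (2*h+1)) = Suc (card {y\<in>{0<..1}. majority_ratio h y = 1 / (1-p)})"
proof -
  let ?L = "{y\<in>{0<..1}. majority_ratio h y = 1 / (1-p)}"
  have "inj_on (\<lambda>y. y / (1-p)) ?L" using assms by (intro inj_onI) simp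
  moreover have "0 \<notin> (\<lambda>y. y / (1-p)) ` ?L" using assms by auto
  ultimately show ?thesis
    unfolding fixpoints_eq_insert_level_set[OF assms(1,2)]
    using assms(3) by (simp add: card_insert_disjoint card_image)
qed

lemma p_star_eqI:
  assumes "1/9 \<le> q" "q < 1/2"
    and below: "\<And>p. 0 \<le> p \<Longrightarrow> p < q \<Longrightarrow> card (fixpoints p k) = 3"
    and at: "card (fixpoints q k) = 2"
    and above: "\<And>p. q < p \<Longrightarrow> p \<le> 1 \<Longrightarrow> fixpoints p k = {0}"
  shows "p_star k = q"
  unfolding p_star_def
proof (rule the_equality)
  fix q' assume q': "1/9 \<le> q' \<and> q' < 1/2 \<and>
       (\<forall>p. 0 \<le> p \<and> p < q' \<longrightarrow> card (fixpoints p k) = 3) \<and>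
       card (fixpoints q' k) = 2 \<and> (\<forall>p. q' < p \<and> p \<le> 1 \<longrightarrow> fixpoints p k = {0})"
  show "q' = q"
  proof (cases q' q rule: linorder_cases)
    case less
    then show ?thesis using below[of q'] q' by simp
  next
    case greater
    then show ?thesis using q' \<open>1/9 \<le> q\<close> at by auto
  qed
qed (use assms in auto)

lemma card_fixpoints_below_peak:
  assumes "1 \<le> h" "0 < y0" "y0 < 1"
    and "strict_mono_on {0..y0} (majority_ratio h)" "strict_antimono_on {y0..1} (majority_ratio h)"
    and "0 \<le> p" "1 < (1-p) * majority_ratio h y0"
  shows "card (fixpoints p (2*h+1)) = 3"
proof -
  have "0 < majority_ratio h y0" using assms by (intro majority_ratio_pos) auto
  moreover have "0 < (1-p) * majority_ratio h y0" using assms(7) by linarith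
  ultimately have "p < 1" using zero_less_mult_pos2[of "1-p"] by simp
  let ?v = "1 / (1-p)"
  have "?v < majority_ratio h y0" "1 \<le> ?v" using assms(6,7) \<open>p < 1\<close> by (simp_all add: field_simps)
  with assms(1-5) \<open>p < 1\<close> have "card {y\<in>{0..1}. majority_ratio h y = ?v} = 2"
    by (intro card_level_set_unimodal continuous_on_majority_ratio) (simp_all add: majority_ratio_0)
  moreover have "{y\<in>{0<..1}. majority_ratio h y = ?v} = {y\<in>{0..1}. majority_ratio h y = ?v}"
    using assms(1) \<open>p < 1\<close> by (intro level_set_majority_ratio_nonzero) auto
  ultimately show ?thesis
    using card_fixpoints_eq_Suc[OF \<open>0 \<le> p\<close> \<open>p < 1\<close>, of h] by (simp add: card_ge_0_finite)
qed

lemma card_fixpoints_at_peak: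
  assumes "1 \<le> h" "0 < y0" "y0 < 1"
    and "strict_mono_on {0..y0} (majority_ratio h)" "strict_antimono_on {y0..1} (majority_ratio h)"
    and "0 \<le> p" "(1-p) * majority_ratio h y0 = 1"
  shows "card (fixpoints p (2*h+1)) = 2"
proof -
  have "0 < majority_ratio h y0" using assms by (intro majority_ratio_pos) auto
  moreover have "0 < (1-p) * majority_ratio h y0" using assms(7) by linarith
  ultimately have "p < 1" using zero_less_mult_pos2[of "1-p"] by simp
  then have "majority_ratio h y0 = 1 / (1-p)" using assms(7) by (simp add: field_simps)
  then have "{y\<in>{0<..1}. majority_ratio h y = 1 / (1-p)}
      = {y\<in>{0..1}. majority_ratio h y = majority_ratio h y0}"
    using level_set_majority_ratio_nonzero[OF assms(1), of "1 / (1-p)"] \<open>p < 1\<close> by simp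
  also have "\<dots> = {y0}" using assms(2-5) by (intro level_set_unimodal_peak) auto
  finally show ?thesis using card_fixpoints_eq_Suc[OF \<open>0 \<le> p\<close> \<open>p < 1\<close>, of h] by simp
qed

lemma fixpoints_eq_zero:
  assumes "\<forall>y\<in>{0..1}. majority_poly h y \<le> M * y" "0 \<le> p" "p \<le> 1" "(1-p) * M < 1"
  shows "fixpoints p (2*h+1) = {0}"
proof (intro equalityI subsetI)
  fix x assume "x \<in> fixpoints p (2*h+1)"
  then have x: "0 \<le> x" "x \<le> 1" "majority_poly h ((1-p)*x) = x" unfolding fixpoints_odd by auto
  show "x \<in> {0}"
  proof (rule ccontr)
    assume "x \<notin> {0}"
    with x have "0 < x" by simp
    have "(1-p)*x \<in> {0..1}" using assms(2,3) x by (auto intro: mult_le_one)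
    then have "x \<le> M * ((1-p)*x)" using assms(1) x(3) by metis
    also have "\<dots> = ((1-p) * M) * x" by simp
    also have "\<dots> < x" using assms(4) \<open>0 < x\<close> by simp
    finally show False by simp
  qed
qed (unfold fixpoints_odd, simp)

lemma p_star_odd:
  assumes "1 \<le> h"
  obtains M where "9/8 \<le> M" "M < 2" "\<forall>y\<in>{0..1}. majority_poly h y \<le> M * y"
    "p_star (2*h+1) = 1 - 1/M"
proof -
  obtain y0 where y0: "1/2 < y0" "y0 < 1"
    and inc: "strict_mono_on {0..y0} (majority_ratio h)"
    and dec: "strict_antimono_on {y0..1} (majority_ratio h)"
    using majority_ratio_unimodal[OF assms] by blast
  define M where "M = majority_ratio h y0"
  have le_M: "majority_ratio h y \<le> M" if "0 \<le> y" "y \<le> 1" for y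
  proof (cases "y \<le> y0")
    case True
    then show ?thesis using that y0 strict_mono_on_leD[OF inc] by (simp add: M_def)
  next
    case False
    then show ?thesis using that y0 monotone_onD[OF dec, of y0 y] by (simp add: M_def)
  qed
  have poly_le: "\<forall>y\<in>{0..1}. majority_poly h y \<le> M * y"
    using le_M by (auto simp: majority_poly_eq_mult_ratio mult.commute intro: mult_left_mono)
  have "9/8 \<le> M" using le_M[of "3/4"] majority_ratio_three_quarters[OF assms] by simp
  then have "1/M \<le> 8/9" by (simp add: field_simps)
  moreover have "M < 2" using majority_ratio_less_2[of y0 h] y0 by (simp add: M_def)
  moreover have "p_star (2*h+1) = 1 - 1/M"
  proof (rule p_star_eqI)
    show "1/9 \<le> 1 - 1/M" "1 - 1/M < 1/2" using \<open>9/8 \<le> M\<close> \<open>M < 2\<close> by (simp_all add: field_simps)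
    show "card (fixpoints p (2*h+1)) = 3" if "0 \<le> p" "p < 1 - 1/M" for p
      using that \<open>9/8 \<le> M\<close> y0 inc dec
      by (intro card_fixpoints_below_peak[OF assms]) (auto simp: M_def field_simps)
    show "card (fixpoints (1 - 1/M) (2*h+1)) = 2"
      using \<open>9/8 \<le> M\<close> y0 inc dec by (intro card_fixpoints_at_peak[OF assms]) (auto simp: M_def)
    show "fixpoints p (2*h+1) = {0}" if "1 - 1/M < p" "p \<le> 1" for p
    proof (rule fixpoints_eq_zero[OF poly_le])
      show "0 \<le> p" "p \<le> 1" using that \<open>1/M \<le> 8/9\<close> by simp_all
      show "(1-p) * M < 1" using that \<open>9/8 \<le> M\<close> by (simp add: field_simps)
    qed
  qed
  ultimately show ?thesis using that poly_le \<open>9/8 \<le> M\<close> by blast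
qed

lemma p_star_ge:
  assumes "odd k" "3 \<le> k"
  shows "1/9 \<le> p_star k"
proof -
  obtain h where "k = 2*h+1" "1 \<le> h" using assms by (auto elim: oddE)
  moreover obtain M where "9/8 \<le> M" "p_star (2*h+1) = 1 - 1/M"
    using p_star_odd[OF \<open>1 \<le> h\<close>] by blast
  moreover have "1/M \<le> 8/9" using \<open>9/8 \<le> M\<close> by (simp add: field_simps)
  ultimately show ?thesis by simp
qed

lemma F_le_mult_above_p_star:
  assumes "odd k" "3 \<le> k" "p_star k < p" "p \<le> 1"
  obtains \<rho> where "0 \<le> \<rho>" "\<rho> < 1" "\<forall>x\<in>{0..1}. F p k x \<le> \<rho> * x"
proof -
  obtain h where k: "k = 2*h+1" and "1 \<le> h" using assms by (auto elim: oddE)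
  obtain M where "9/8 \<le> M" and poly_le: "\<forall>y\<in>{0..1}. majority_poly h y \<le> M * y"
    and p_star: "p_star (2*h+1) = 1 - 1/M"
    using p_star_odd[OF \<open>1 \<le> h\<close>] by blast
  have "0 \<le> p" using p_star_ge[OF assms(1,2)] assms(3) by simp
  show ?thesis
  proof (rule that)
    show "0 \<le> (1-p) * M" using assms(4) \<open>9/8 \<le> M\<close> by simp
    have "1 - p < 1/M" using assms(3) p_star k by simp
    with \<open>9/8 \<le> M\<close> show "(1-p) * M < 1" by (simp add: pos_less_divide_eq)
    show "\<forall>x\<in>{0..1}. F p k x \<le> (1-p) * M * x"
    proof
      fix x :: real assume "x \<in> {0..1}"
      then have "(1-p)*x \<in> {0..1}" using \<open>0 \<le> p\<close> assms(4) by (auto intro: mult_le_one)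
      then have "majority_poly h ((1-p)*x) \<le> M * ((1-p)*x)" using poly_le by blast
      then show "F p k x \<le> (1-p) * M * x" unfolding k F_eq_majority_poly by (simp add: mult_ac)
    qed
  qed
qed

section \<open>Concentration in one round\<close>

lemma indep_vars_Pi_pmf_indicator:
  assumes "finite A" "I \<subseteq> A"
  shows "prob_space.indep_vars (measure_pmf (Pi_pmf A dflt q)) (\<lambda>_. borel)
           (\<lambda>i \<omega>. if \<omega> i then 1 else 0 :: real) I"
proof -
  have "prob_space.indep_vars (measure_pmf (Pi_pmf A dflt q)) (\<lambda>_. borel)
      (\<lambda>i \<omega>. if \<omega> i then 1 else 0 :: real) A"
    using prob_space.indep_vars_compose2[OF measure_pmf.prob_space_axioms
        indep_vars_Pi_pmf[OF assms(1)], of "\<lambda>_ b. if b then 1 else 0 :: real" "\<lambda>_. borel"]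
    by simp
  then show ?thesis by (rule prob_space.indep_vars_subset[OF measure_pmf.prob_space_axioms _ assms(2)])
qed

lemma expectation_Pi_pmf_indicator:
  assumes "finite A" "i \<in> A"
  shows "measure_pmf.expectation (Pi_pmf A dflt q) (\<lambda>\<omega>. if \<omega> i then 1 else 0 :: real)
    = pmf (q i) True"
proof -
  have "measure_pmf.expectation (Pi_pmf A dflt q) (\<lambda>\<omega>. if \<omega> i then 1 else 0 :: real)
      = measure_pmf.expectation (map_pmf (\<lambda>\<omega>. \<omega> i) (Pi_pmf A dflt q)) (\<lambda>b. if b then 1 else 0)"
    by simp
  also have "map_pmf (\<lambda>\<omega>. \<omega> i) (Pi_pmf A dflt q) = q i"
    using assms by (subst Pi_pmf_component[OF assms(1)]) auto
  finally show ?thesis by (simp add: integral_measure_pmf_real[of "{True}"] split: if_splits)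
qed

lemma Hoeffding_Pi_pmf_fraction:
  fixes q :: "'a \<Rightarrow> bool pmf" and \<epsilon> :: real
  assumes "finite A" "I \<subseteq> A" "I \<noteq> {}" "0 \<le> \<epsilon>"
  shows "measure_pmf.prob (Pi_pmf A dflt q)
      {\<omega>. (\<Sum>i\<in>I. pmf (q i) True) / card I + \<epsilon> \<le> card {i\<in>I. \<omega> i} / card I}
    \<le> exp (-2 * \<epsilon>^2 * card I)"
proof -
  define P where "P = Pi_pmf A dflt q"
  define X where "X i \<omega> = (if \<omega> i then 1 else 0 :: real)" for i and \<omega> :: "'a \<Rightarrow> bool"
  have "finite I" using assms(1,2) by (rule finite_subset[rotated])
  with assms(3) have card_pos: "0 < real (card I)" by (simp add: card_gt_0_iff)
  define \<mu> where "\<mu> = (\<Sum>i\<in>I. measure_pmf.expectation P (X i))"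
  have indep: "prob_space.indep_vars (measure_pmf P) (\<lambda>_. borel) X I"
    unfolding P_def X_def[abs_def] by (rule indep_vars_Pi_pmf_indicator[OF assms(1,2)])
  interpret Hoeffding_ineq "measure_pmf P" I X "\<lambda>_. 0" "\<lambda>_. 1" \<mu>
    using \<open>finite I\<close> indep by unfold_locales (auto simp: X_def \<mu>_def)
  have \<mu>_eq: "\<mu> = (\<Sum>i\<in>I. pmf (q i) True)"
    unfolding \<mu>_def P_def X_def using assms(2)
    by (intro sum.cong refl expectation_Pi_pmf_indicator[OF assms(1)]) auto
  have sum_X: "(\<Sum>i\<in>I. X i \<omega>) = card {i\<in>I. \<omega> i}" for \<omega>
    unfolding X_def using \<open>finite I\<close> by (simp add: sum.If_cases Int_def)
  have "S / card I + \<epsilon> \<le> m / card I \<longleftrightarrow> S + \<epsilon> * card I \<le> m" for S m :: real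
  proof -
    have "S / card I + \<epsilon> = (S + \<epsilon> * card I) / card I" using card_pos by (simp add: field_simps)
    then show ?thesis using card_pos by (simp add: divide_le_cancel)
  qed
  then have "{\<omega>. (\<Sum>i\<in>I. pmf (q i) True) / card I + \<epsilon> \<le> card {i\<in>I. \<omega> i} / card I}
      = {\<omega>\<in>space (measure_pmf P). \<mu> + \<epsilon> * card I \<le> (\<Sum>i\<in>I. X i \<omega>)}"
    by (simp add: sum_X \<mu>_eq)
  moreover have "measure_pmf.prob P {\<omega>\<in>space (measure_pmf P). \<mu> + \<epsilon> * card I \<le> (\<Sum>i\<in>I. X i \<omega>)}
      \<le> exp (-2 * (\<epsilon> * card I)^2 / (\<Sum>i\<in>I. ((\<lambda>_. 1) i - (\<lambda>_. 0) i)^2))"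
    by (rule Hoeffding_ineq_ge) (use assms(4) card_pos in auto)
  moreover have "-2 * (\<epsilon> * card I)^2 / (\<Sum>i\<in>I. ((\<lambda>_. 1) i - (\<lambda>_. 0) i)^2) = -2 * \<epsilon>^2 * card I"
    using card_pos by (simp add: power2_eq_square)
  ultimately show ?thesis unfolding P_def by simp
qed

lemma finite_verts: "finite (verts n)" and card_verts: "card (verts n) = n"
  unfolding verts_def by simp_all

lemma finite_nbrs: "finite (nbrs G n u)"
  unfolding nbrs_def verts_def by simp

lemma nbrs_subset_verts: "nbrs G n u \<subseteq> verts n"
  unfolding nbrs_def by auto

lemma phi_nonneg: "0 \<le> phi G n \<sigma> u"
  unfolding phi_def by simp

lemma phi_le_1: "phi G n \<sigma> u \<le> 1"
proof -
  have "card (nbrs G n u \<inter> {v. \<sigma> v}) \<le> card (nbrs G n u)"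
    by (intro card_mono finite_nbrs) auto
  then show ?thesis unfolding phi_def deg_def
    by (cases "card (nbrs G n u) = 0") (auto simp: field_simps)
qed

lemma phi_eq_fraction: "phi G n \<sigma> u = card {v\<in>nbrs G n u. \<sigma> v} / card (nbrs G n u)"
  unfolding phi_def deg_def by (simp add: Int_def)

lemma sample_view_eq_bernoulli:
  assumes "nbrs G n u \<noteq> {}" "0 \<le> p" "p \<le> 1"
  shows "sample_view G n p \<sigma> u = bernoulli_pmf ((1-p) * phi G n \<sigma> u)"
proof -
  have view: "pmf (bernoulli_pmf p \<bind> (\<lambda>b. return_pmf (if b then False else \<sigma> v))) True
      = (if \<sigma> v then 1 - p else 0)" for v
    using assms by (simp add: pmf_bind)
  have "pmf (sample_view G n p \<sigma> u) True
      = (\<Sum>v\<in>nbrs G n u. if \<sigma> v then 1 - p else 0) / card (nbrs G n u)"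
    unfolding sample_view_def pmf_bind_pmf_of_set[OF assms(1) finite_nbrs] view ..
  also have "\<dots> = (1-p) * phi G n \<sigma> u"
    using finite_nbrs[of G n u] by (simp add: phi_eq_fraction sum.If_cases Int_def)
  finally have view_True: "pmf (sample_view G n p \<sigma> u) True = (1-p) * phi G n \<sigma> u" .
  have bounds: "0 \<le> (1-p) * phi G n \<sigma> u" "(1-p) * phi G n \<sigma> u \<le> 1"
    using assms(2,3) phi_nonneg[of G n \<sigma> u] phi_le_1[of G n \<sigma> u] by (auto intro: mult_le_one)
  show ?thesis
  proof (rule pmf_eqI)
    fix b show "pmf (sample_view G n p \<sigma> u) b = pmf (bernoulli_pmf ((1-p) * phi G n \<sigma> u)) b"
      using view_True bounds by (cases b) (simp_all add: pmf_False_conv_True)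
  qed
qed

lemma count_list_True_False: "count_list xs True + count_list xs False = length xs"
  by (induction xs) auto

lemma count_list_True_eq_length_filter: "count_list xs True = length (filter id xs)"
  by (induction xs) auto

lemma pmf_node_update_True:
  assumes "nbrs G n u \<noteq> {}" "0 \<le> p" "p \<le> 1"
  shows "pmf (node_update G n k p \<sigma> u) True = F p k (phi G n \<sigma> u)"
proof -
  define q where "q = (1-p) * phi G n \<sigma> u"
  have q: "q \<in> {0..1}"
    using assms(2,3) phi_nonneg[of G n \<sigma> u] phi_le_1[of G n \<sigma> u] by (auto intro: mult_le_one simp: q_def)
  define S where "S = {i. i \<le> k \<and> real i \<ge> (real k + 1) / 2}"
  have "node_update G n k p \<sigma> u
      = map_pmf (\<lambda>views. count_list views True > count_list views False)
          (replicate_pmf k (bernoulli_pmf q))"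
    unfolding node_update_def sample_view_eq_bernoulli[OF assms] q_def map_pmf_def by simp
  also have "\<dots> = map_pmf (\<lambda>i. i \<in> S) (map_pmf (length \<circ> filter id) (replicate_pmf k (bernoulli_pmf q)))"
    unfolding pmf.map_comp
  proof (rule pmf.map_cong[OF refl])
    fix xs assume "xs \<in> set_pmf (replicate_pmf k (bernoulli_pmf q))"
    then have "length xs = k" by (simp add: set_replicate_pmf)
    then show "(count_list xs False < count_list xs True) = ((\<lambda>i. i \<in> S) \<circ> (length \<circ> filter id)) xs"
      using count_list_True_False[of xs] count_list_True_eq_length_filter[of xs]
      unfolding S_def by auto
  qed
  also have "map_pmf (length \<circ> filter id) (replicate_pmf k (bernoulli_pmf q)) = binomial_pmf k q"
    using q by (simp add: binomial_pmf_altdef)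
  finally have "pmf (node_update G n k p \<sigma> u) True = measure_pmf.prob (binomial_pmf k q) S"
    by (simp add: pmf_map vimage_def)
  also have "\<dots> = (\<Sum>i\<in>S. pmf (binomial_pmf k q) i)"
    by (rule measure_measure_pmf_finite) (simp add: S_def)
  also have "\<dots> = F p k (phi G n \<sigma> u)"
    using q unfolding F_def S_def q_def by simp
  finally show ?thesis .
qed

lemma min_deg_le_deg: "u \<in> verts n \<Longrightarrow> min_deg G n \<le> deg G n u"
  unfolding min_deg_def using finite_verts by (intro Min_le) auto

lemma phi_le_phi_max: "u \<in> verts n \<Longrightarrow> phi G n \<sigma> u \<le> phi_max G n \<sigma>"
  unfolding phi_max_def using finite_verts by (intro Max_ge) auto

lemma phi_max_le_iff: "1 \<le> n \<Longrightarrow> phi_max G n \<sigma> \<le> b \<longleftrightarrow> (\<forall>u\<in>verts n. phi G n \<sigma> u \<le> b)"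
  unfolding phi_max_def using finite_verts by (subst Max_le_iff) (auto simp: verts_def)

lemma prob_phi_em_step_ge:
  fixes \<epsilon> :: real
  assumes "\<forall>v\<in>verts n. nbrs G n v \<noteq> {}" "u \<in> verts n" "0 \<le> p" "p \<le> 1" "0 \<le> \<epsilon>"
  shows "measure_pmf.prob (em_step G n k p \<sigma>)
      {\<omega>. (\<Sum>v\<in>nbrs G n u. F p k (phi G n \<sigma> v)) / deg G n u + \<epsilon> \<le> phi G n \<omega> u}
    \<le> exp (-2 * \<epsilon>^2 * deg G n u)"
proof -
  have "(\<Sum>v\<in>nbrs G n u. pmf (node_update G n k p \<sigma> v) True) = (\<Sum>v\<in>nbrs G n u. F p k (phi G n \<sigma> v))"
    using assms nbrs_subset_verts by (intro sum.cong refl pmf_node_update_True) blast+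
  then show ?thesis
    using Hoeffding_Pi_pmf_fraction[OF finite_verts nbrs_subset_verts, of G n u \<epsilon> False
        "node_update G n k p \<sigma>"] assms(1,2,5)
    by (simp add: em_step_def phi_eq_fraction deg_def)
qed

lemma average_F_phi_le:
  fixes \<rho> b :: real
  assumes "nbrs G n u \<noteq> {}" "\<forall>x\<in>{0..1}. F p k x \<le> \<rho> * x" "0 \<le> \<rho>" "phi_max G n \<sigma> \<le> b"
  shows "(\<Sum>v\<in>nbrs G n u. F p k (phi G n \<sigma> v)) / deg G n u \<le> \<rho> * b"
proof -
  have "(\<Sum>v\<in>nbrs G n u. F p k (phi G n \<sigma> v)) \<le> (\<Sum>v\<in>nbrs G n u. \<rho> * b)"
  proof (rule sum_mono)
    fix v assume "v \<in> nbrs G n u"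
    then have "v \<in> verts n" using nbrs_subset_verts by blast
    then have "phi G n \<sigma> v \<le> b" using assms(4) phi_le_phi_max order_trans by blast
    then show "F p k (phi G n \<sigma> v) \<le> \<rho> * b"
      using assms(2,3) phi_nonneg phi_le_1 by (meson atLeastAtMost_iff mult_left_mono order_trans)
  qed
  also have "\<dots> = \<rho> * b * deg G n u" by (simp add: deg_def)
  finally have "(\<Sum>v\<in>nbrs G n u. F p k (phi G n \<sigma> v)) \<le> \<rho> * b * deg G n u" .
  moreover have "0 < real (deg G n u)"
    using assms(1) finite_nbrs by (simp add: deg_def card_gt_0_iff)
  ultimately show ?thesis by (simp add: pos_divide_le_eq)
qed

lemma prob_phi_max_em_step_gt:
  fixes \<epsilon> \<rho> b :: real
  assumes "1 \<le> n" "\<forall>v\<in>verts n. nbrs G n v \<noteq> {}" "0 \<le> p" "p \<le> 1" "0 \<le> \<epsilon>"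
    and contraction: "\<forall>x\<in>{0..1}. F p k x \<le> \<rho> * x" and "0 \<le> \<rho>"
    and "phi_max G n \<sigma> \<le> b"
  shows "measure_pmf.prob (em_step G n k p \<sigma>) {\<omega>. \<rho> * b + \<epsilon> < phi_max G n \<omega>}
    \<le> n * exp (-2 * \<epsilon>^2 * min_deg G n)"
proof -
  let ?P = "em_step G n k p \<sigma>"
  let ?mean = "\<lambda>u. (\<Sum>v\<in>nbrs G n u. F p k (phi G n \<sigma> v)) / deg G n u"
  have mean_le: "?mean u \<le> \<rho> * b" if "u \<in> verts n" for u
    using assms that by (intro average_F_phi_le) auto
  have "{\<omega>. \<rho> * b + \<epsilon> < phi_max G n \<omega>} \<subseteq> (\<Union>u\<in>verts n. {\<omega>. ?mean u + \<epsilon> \<le> phi G n \<omega> u})"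
  proof
    fix \<omega> assume "\<omega> \<in> {\<omega>. \<rho> * b + \<epsilon> < phi_max G n \<omega>}"
    then obtain u where "u \<in> verts n" "\<rho> * b + \<epsilon> < phi G n \<omega> u"
      using phi_max_le_iff[OF assms(1), of G \<omega> "\<rho> * b + \<epsilon>"] by (auto simp: not_le)
    then show "\<omega> \<in> (\<Union>u\<in>verts n. {\<omega>. ?mean u + \<epsilon> \<le> phi G n \<omega> u})"
      using mean_le by fastforce
  qed
  then have "measure_pmf.prob ?P {\<omega>. \<rho> * b + \<epsilon> < phi_max G n \<omega>}
      \<le> measure_pmf.prob ?P (\<Union>u\<in>verts n. {\<omega>. ?mean u + \<epsilon> \<le> phi G n \<omega> u})"
    by (intro measure_pmf.finite_measure_mono) auto
  also have "\<dots> \<le> (\<Sum>u\<in>verts n. measure_pmf.prob ?P {\<omega>. ?mean u + \<epsilon> \<le> phi G n \<omega> u})"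
    by (intro measure_pmf.finite_measure_subadditive_finite finite_verts) auto
  also have "\<dots> \<le> (\<Sum>u\<in>verts n. exp (-2 * \<epsilon>^2 * min_deg G n))"
  proof (rule sum_mono)
    fix u assume u: "u \<in> verts n"
    have "measure_pmf.prob ?P {\<omega>. ?mean u + \<epsilon> \<le> phi G n \<omega> u} \<le> exp (-2 * \<epsilon>^2 * deg G n u)"
      using assms u by (intro prob_phi_em_step_ge) auto
    also have "\<dots> \<le> exp (-2 * \<epsilon>^2 * min_deg G n)"
      using min_deg_le_deg[OF u, of G] by (simp add: mult_left_mono)
    finally show "measure_pmf.prob ?P {\<omega>. ?mean u + \<epsilon> \<le> phi G n \<omega> u}
        \<le> exp (-2 * \<epsilon>^2 * min_deg G n)" .
  qed
  also have "\<dots> = n * exp (-2 * \<epsilon>^2 * min_deg G n)" by (simp add: card_verts)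
  finally show ?thesis .
qed

section \<open>Decay of phi_max along a trajectory\<close>

lemma measure_pmf_bind_le:
  assumes "\<And>x. x \<in> set_pmf M \<Longrightarrow> x \<notin> B \<Longrightarrow> measure_pmf.prob (N x) A \<le> e" "0 \<le> e"
  shows "measure_pmf.prob (bind_pmf M N) A \<le> measure_pmf.prob M B + e"
proof -
  have "emeasure (measure_pmf (bind_pmf M N)) A = (\<integral>\<^sup>+x. emeasure (measure_pmf (N x)) A \<partial>M)"
    by simp
  also have "\<dots> \<le> (\<integral>\<^sup>+x. indicator B x + ennreal e \<partial>M)"
  proof (rule nn_integral_mono_AE, rule AE_pmfI)
    fix x assume x: "x \<in> set_pmf M"
    show "emeasure (measure_pmf (N x)) A \<le> indicator B x + ennreal e"
    proof (cases "x \<in> B")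
      case True
      then show ?thesis using measure_pmf.emeasure_le_1[of "N x" A] by (simp add: add_increasing2)
    next
      case False
      then show ?thesis
        using assms(1)[OF x False] by (simp add: measure_pmf.emeasure_eq_measure ennreal_leI)
    qed
  qed
  also have "\<dots> = emeasure (measure_pmf M) B + ennreal e"
    by (simp add: nn_integral_add measure_pmf.emeasure_space_1)
  also have "\<dots> = ennreal (measure_pmf.prob M B + e)"
    using assms(2) by (simp add: measure_pmf.emeasure_eq_measure ennreal_plus)
  finally have "ennreal (measure_pmf.prob (bind_pmf M N) A) \<le> ennreal (measure_pmf.prob M B + e)"
    by (simp only: measure_pmf.emeasure_eq_measure)
  then show ?thesis using assms(2) by (subst (asm) ennreal_le_iff) auto
qed

lemma length_em_traj: "xs \<in> set_pmf (em_traj G n k p t) \<Longrightarrow> length xs = Suc t"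
  by (induction t arbitrary: xs) auto

lemma prob_em_traj_phi_max_gt:
  fixes \<epsilon> \<rho> :: real and B :: "nat \<Rightarrow> real"
  assumes "1 \<le> n" "\<forall>v\<in>verts n. nbrs G n v \<noteq> {}" "0 \<le> p" "p \<le> 1" "0 \<le> \<epsilon>"
    and "\<forall>x\<in>{0..1}. F p k x \<le> \<rho> * x" "0 \<le> \<rho>"
    and "1 \<le> B 0" "\<And>t. \<rho> * B t + \<epsilon> \<le> B (Suc t)"
  shows "measure_pmf.prob (em_traj G n k p t) {xs. B t < phi_max G n (last xs)}
    \<le> t * (n * exp (-2 * \<epsilon>^2 * min_deg G n))"
proof (induction t)
  case 0
  have "phi_max G n (\<lambda>u. u \<in> verts n) \<le> B 0"
    using phi_max_le_iff[OF assms(1)] phi_le_1 assms(8) order_trans by blast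
  then show ?case by (simp add: measure_return_pmf)
next
  case (Suc t)
  let ?e = "n * exp (-2 * \<epsilon>^2 * min_deg G n)"
  have "em_traj G n k p (Suc t)
      = em_traj G n k p t \<bind> (\<lambda>xs. map_pmf (\<lambda>\<sigma>. xs @ [\<sigma>]) (em_step G n k p (last xs)))"
    by (simp add: map_pmf_def)
  then have "measure_pmf.prob (em_traj G n k p (Suc t)) {xs. B (Suc t) < phi_max G n (last xs)}
      \<le> measure_pmf.prob (em_traj G n k p t) {xs. B t < phi_max G n (last xs)} + ?e"
  proof (simp only:, intro measure_pmf_bind_le)
    fix xs assume "xs \<notin> {xs. B t < phi_max G n (last xs)}"
    then have "phi_max G n (last xs) \<le> B t" by simp
    then have "measure_pmf.prob (em_step G n k p (last xs)) {\<sigma>. \<rho> * B t + \<epsilon> < phi_max G n \<sigma>} \<le> ?e"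
      using assms by (intro prob_phi_max_em_step_gt) auto
    moreover have "measure_pmf.prob (em_step G n k p (last xs)) {\<sigma>. B (Suc t) < phi_max G n \<sigma>}
        \<le> measure_pmf.prob (em_step G n k p (last xs)) {\<sigma>. \<rho> * B t + \<epsilon> < phi_max G n \<sigma>}"
      using assms(9)[of t] by (intro measure_pmf.finite_measure_mono) auto
    ultimately show "measure_pmf.prob (map_pmf (\<lambda>\<sigma>. xs @ [\<sigma>]) (em_step G n k p (last xs)))
        {xs. B (Suc t) < phi_max G n (last xs)} \<le> ?e"
      by (simp add: vimage_def)
  qed simp
  also have "\<dots> \<le> t * ?e + ?e" using Suc by simp
  finally show ?case by (simp add: algebra_simps)
qed

lemma mult_exp_le_inverse:
  fixes c d :: real and n :: nat
  assumes "2 \<le> n" "ln n \<le> c * d"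
  shows "n * exp (-2 * c * d) \<le> 1 / n"
proof -
  have "0 < real n" using assms(1) by simp
  have "exp (-2 * c * d) \<le> exp (- (2 * ln n))" using assms(2) by simp
  also have "exp (2 * ln n) = real n * real n"
    using \<open>0 < real n\<close> by (simp only: mult_2 exp_add exp_ln)
  then have "exp (- (2 * ln n)) = 1 / (real n * real n)" by (simp add: exp_minus divide_inverse)
  finally have "n * exp (-2 * c * d) \<le> n * (1 / (real n * real n))"
    using \<open>0 < real n\<close> by (intro mult_left_mono) auto
  with \<open>0 < real n\<close> show ?thesis by simp
qed

lemma prob_em_traj_hits_ge:
  fixes \<epsilon> \<rho> :: real and B :: "nat \<Rightarrow> real"
  assumes "2 \<le> n" "0 < \<epsilon>" "ln n \<le> \<epsilon>^2 * min_deg G n" "0 \<le> p" "p \<le> 1"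
    and "\<forall>x\<in>{0..1}. F p k x \<le> \<rho> * x" "0 \<le> \<rho>"
    and "1 \<le> B 0" "\<And>t. \<rho> * B t + \<epsilon> \<le> B (Suc t)"
  shows "1 - T / n \<le> measure_pmf.prob (em_traj G n k p T) {xs. \<exists>t\<le>T. phi_max G n (xs ! t) \<le> B T}"
proof -
  let ?good = "{xs. \<exists>t\<le>T. phi_max G n (xs ! t) \<le> B T}"
  let ?P = "em_traj G n k p T"
  let ?bad = "{xs. B T < phi_max G n (last xs)}"
  have "0 < min_deg G n" using assms(1,3) ln_gt_zero[of n] by (cases "min_deg G n") auto
  then have "\<forall>v\<in>verts n. nbrs G n v \<noteq> {}"
    using min_deg_le_deg[of _ n G] by (fastforce simp: deg_def)
  then have "measure_pmf.prob ?P ?bad \<le> T * (n * exp (-2 * \<epsilon>^2 * min_deg G n))"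
    using assms by (intro prob_em_traj_phi_max_gt[where \<rho>=\<rho>]) auto
  also have "\<dots> \<le> T * (1 / n)"
    using mult_exp_le_inverse[OF assms(1,3)] by (intro mult_left_mono) auto
  finally have bad: "measure_pmf.prob ?P ?bad \<le> T / n" by simp
  have "AE xs in ?P. xs \<in> ?good \<union> ?bad"
  proof (rule AE_pmfI)
    fix xs assume "xs \<in> set_pmf ?P"
    then have "length xs = Suc T" by (rule length_em_traj)
    moreover from this have "xs \<noteq> []" by auto
    ultimately have "last xs = xs ! T" by (simp add: last_conv_nth)
    then show "xs \<in> ?good \<union> ?bad" by force
  qed
  then have "measure_pmf.prob ?P (?good \<union> ?bad) = 1"
    by (subst measure_pmf.prob_eq_1) simp_all
  moreover have "measure_pmf.prob ?P (?good \<union> ?bad)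
      \<le> measure_pmf.prob ?P ?good + measure_pmf.prob ?P ?bad"
    by (rule measure_Un_le) auto
  ultimately show ?thesis using bad by simp
qed

lemma threshold_schedule:
  fixes \<rho> \<gamma> :: real
  assumes "0 \<le> \<rho>" "\<rho> < 1" "0 < \<gamma>"
  obtains T :: nat and B :: "nat \<Rightarrow> real"
  where "1 \<le> B 0" "\<And>t. \<rho> * B t + (1-\<rho>) * \<gamma> / 2 \<le> B (Suc t)" "B T = \<gamma>"
proof -
  define r where "r = (1 + \<rho>) / 2"
  have "0 \<le> r" "r < 1" using assms(1,2) by (simp_all add: r_def)
  obtain T where "r^T < \<gamma>" using real_arch_pow_inv[OF assms(3) \<open>r < 1\<close>] by blast
  define B where "B t = max \<gamma> (r^t)" for t
  show ?thesis
  proof (rule that)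
    show "1 \<le> B 0" "B T = \<gamma>" using \<open>r^T < \<gamma>\<close> by (simp_all add: B_def)
  next
    fix t
    have "\<rho> * B t + (1-\<rho>) * \<gamma> / 2 \<le> \<rho> * B t + (1-\<rho>) * B t / 2"
      using assms(2) by (simp add: B_def)
    also have "\<dots> = r * B t" by (simp add: r_def field_simps)
    also have "\<dots> = max (r * \<gamma>) (r^Suc t)"
      using \<open>0 \<le> r\<close> by (simp add: B_def max_mult_distrib_left)
    also have "\<dots> \<le> B (Suc t)"
      unfolding B_def using \<open>0 \<le> r\<close> \<open>r < 1\<close> assms(3)
      by (intro max.mono mult_left_le_one_le) auto
    finally show "\<rho> * B t + (1-\<rho>) * \<gamma> / 2 \<le> B (Suc t)" .
  qed
qed

lemma eventually_prob_em_traj_hits_ge: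
  fixes \<epsilon> \<rho> :: real and B :: "nat \<Rightarrow> real"
  assumes "filterlim (\<lambda>n. real (min_deg G n) / ln (real n)) at_top sequentially"
    and "0 < \<epsilon>" "0 \<le> p" "p \<le> 1" "\<forall>x\<in>{0..1}. F p k x \<le> \<rho> * x" "0 \<le> \<rho>"
    and "1 \<le> B 0" "\<And>t. \<rho> * B t + \<epsilon> \<le> B (Suc t)"
  shows "eventually (\<lambda>n. 1 - T / n
    \<le> measure_pmf.prob (em_traj G n k p T) {xs. \<exists>t\<le>T. phi_max G n (xs ! t) \<le> B T}) sequentially"
proof -
  have "eventually (\<lambda>n. 1/\<epsilon>^2 \<le> real (min_deg G n) / ln (real n)) sequentially"
    using assms(1) unfolding filterlim_at_top by blast
  then show ?thesis using eventually_ge_at_top[of 2]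
  proof eventually_elim
    case (elim n)
    then have "0 < ln (real n)" by simp
    with elim(1) \<open>0 < \<epsilon>\<close> have "ln n / \<epsilon>^2 \<le> min_deg G n" by (simp add: field_simps)
    with \<open>0 < \<epsilon>\<close> have "ln n \<le> \<epsilon>^2 * min_deg G n" by (simp add: field_simps)
    then show ?case
      by (rule prob_em_traj_hits_ge[where \<rho>=\<rho> and B=B, OF elim(2) \<open>0 < \<epsilon>\<close> _ assms(3-8)])
  qed
qed

lemma em_traj_reaches_threshold:
  fixes \<rho> \<gamma> :: real
  assumes "0 \<le> p" "p \<le> 1" "\<forall>x\<in>{0..1}. F p k x \<le> \<rho> * x" "0 \<le> \<rho>" "\<rho> < 1" "0 < \<gamma>"
  obtains T where "\<And>G. filterlim (\<lambda>n. real (min_deg G n) / ln (real n)) at_top sequentially \<Longrightarrow>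
    (\<lambda>n. measure_pmf.prob (em_traj G n k p T) {xs. \<exists>t\<le>T. phi_max G n (xs ! t) \<le> \<gamma>})
      \<longlonglongrightarrow> 1"
proof -
  obtain B T where B: "1 \<le> B 0" "\<And>t. \<rho> * B t + (1-\<rho>) * \<gamma> / 2 \<le> B (Suc t)" "B T = \<gamma>"
    using threshold_schedule[OF assms(4-6)] by metis
  have "0 < (1-\<rho>) * \<gamma> / 2" using assms(5,6) by simp
  show ?thesis
  proof (rule that)
    fix G assume "filterlim (\<lambda>n. real (min_deg G n) / ln (real n)) at_top sequentially"
    from eventually_prob_em_traj_hits_ge[where T=T, OF this \<open>0 < (1-\<rho>) * \<gamma> / 2\<close> assms(1-4) B(1,2)]
    have lower: "eventually (\<lambda>n. 1 - T / n
        \<le> measure_pmf.prob (em_traj G n k p T) {xs. \<exists>t\<le>T. phi_max G n (xs ! t) \<le> \<gamma>}) sequentially"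
      unfolding B(3) .
    have upper: "eventually (\<lambda>n. measure_pmf.prob (em_traj G n k p T)
        {xs. \<exists>t\<le>T. phi_max G n (xs ! t) \<le> \<gamma>} \<le> 1) sequentially"
      by simp
    have "(\<lambda>n. 1 - real T / real n) \<longlonglongrightarrow> 1 - 0"
      by (intro tendsto_diff tendsto_const lim_const_over_n)
    then have "(\<lambda>n. 1 - real T / real n) \<longlonglongrightarrow> 1" by simp
    from tendsto_sandwich[OF lower upper this tendsto_const]
    show "(\<lambda>n. measure_pmf.prob (em_traj G n k p T)
        {xs. \<exists>t\<le>T. phi_max G n (xs ! t) \<le> \<gamma>}) \<longlonglongrightarrow> 1" .
  qed
qed

theorem proposition5p7:
  fixes k :: nat and p :: real
  assumes "odd k" and "k \<ge> 3"
    and "p_star k < p" and "p \<le> 1"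
  shows "\<forall>\<gamma>>0. \<exists>T::nat. \<forall>G. simple_graph_seq G \<and>
            filterlim (\<lambda>n. real (min_deg G n) / ln (real n)) at_top sequentially \<longrightarrow>
            ((\<lambda>n. measure_pmf.prob (em_traj G n k p T)
                    {xs. \<exists>t\<le>T. phi_max G n (xs ! t) \<le> \<gamma>}) \<longlonglongrightarrow> 1)"
proof (intro allI impI)
  fix \<gamma> :: real assume "0 < \<gamma>"
  have "0 \<le> p" using p_star_ge[OF assms(1,2)] assms(3) by simp
  obtain \<rho> where "0 \<le> \<rho>" "\<rho> < 1" "\<forall>x\<in>{0..1}. F p k x \<le> \<rho> * x"
    using F_le_mult_above_p_star[OF assms] by blast
  then obtain T where "\<And>G. filterlim (\<lambda>n. real (min_deg G n) / ln (real n)) at_top sequentially \<Longrightarrow>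
      (\<lambda>n. measure_pmf.prob (em_traj G n k p T) {xs. \<exists>t\<le>T. phi_max G n (xs ! t) \<le> \<gamma>})
        \<longlonglongrightarrow> 1"
    using em_traj_reaches_threshold[OF \<open>0 \<le> p\<close> assms(4) _ _ _ \<open>0 < \<gamma>\<close>] by blast
  then show "\<exists>T::nat. \<forall>G. simple_graph_seq G \<and>
      filterlim (\<lambda>n. real (min_deg G n) / ln (real n)) at_top sequentially \<longrightarrow>
      (\<lambda>n. measure_pmf.prob (em_traj G n k p T) {xs. \<exists>t\<le>T. phi_max G n (xs ! t) \<le> \<gamma>})
        \<longlonglongrightarrow> 1"
    by blast
qed

end
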